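(* Let $A\in\mathbb{R}_+^{n\times n}$ be a nonzero circulant matrix. Then $$x\in\mathrm{Attr}(A)\iff A^{n^2}_{i\bullet}\otimes x=A^{n^2}_{j\bullet}\otimes x\ \text{ for all } i,j\in\{1,\dots,n\}\text{ with }[i]\to_1[j],$$ and $$x\in\mathrm{Attr}(A)\iff A^{n^2}_{i\bullet}\otimes x=A^{n^2}_{j\bullet}\otimes x\ \text{ for all } i,j\in\{1,\dots,n\}\text{ with } i\sim_A j.$$
   Context: Max algebra on $\mathbb{R}_+$: $\oplus=\max$, ordinary product; $A^t$ max-algebraic power, $A^t_{i\bullet}$ its $i$-th row, $A^t_{i\bullet}\otimes x=\max_k (A^t)_{i,k}x_k$. $\lambda(A)$: greatest max-algebraic eigenvalue (maximum cycle geometric mean of the weighted digraph $\mathcal{G}(A)$ with edges $(i,j)$, $A_{i,j}\ne0$). $\mathrm{Attr}(A)=\{x\in\mathbb{R}_+^n: A^{t+1}\otimes x=\lambda(A)A^t\otimes x\text{ for some }t\ge0\}$. The critical digraph $\mathcal{C}(A)$ consists of all nodes and edges of cycles attaining mean $\lambda(A)$; for a nonzero circulant every node is critical and $\mathcal{C}(A)$ is a disjoint union of strongly connected components. $i\sim_A j$ means $i,j$ lie in the same component of $\mathcal{C}(A)$. For a component with cyclicity $\sigma$ (gcd of its cycle lengths), nodes $i,j$ of it are in the same cyclic class if walks in the component from $i$ to $j$ have length divisible by $\sigma$; $[i]$ is the cyclic class of $i$, and $[i]\to_1[j]$ means walks from a member of $[i]$ to a member of $[j]$ (in the same component) have length $\equiv1\pmod\sigma$.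 A circulant matrix has $A_{i,j}=a_t$, $t\equiv j-i\pmod n$. *)

theory Defs
  imports Complex_Main
begin

text \<open>An n x n matrix is a function
  nat \<Rightarrow> nat \<Rightarrow> real, only entries with indices in {0..<n} matter
  (nodes are indexed 0,...,n-1 instead of 1,...,n).\<close>

definition mmult :: "nat \<Rightarrow> (nat \<Rightarrow> nat \<Rightarrow> real) \<Rightarrow> (nat \<Rightarrow> nat \<Rightarrow> real) \<Rightarrow> nat \<Rightarrow> nat \<Rightarrow> real" where
  "mmult n A B i j = Max ((\<lambda>k. A i k * B k j) ` {..<n})"

fun mpow :: "nat \<Rightarrow> (nat \<Rightarrow> nat \<Rightarrow> real) \<Rightarrow> nat \<Rightarrow> nat \<Rightarrow> nat \<Rightarrow> real" where
  "mpow n A 0 = (\<lambda>i j. if i = j then 1 else 0)"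
| "mpow n A (Suc t) = mmult n (mpow n A t) A"

definition mrow_vec :: "nat \<Rightarrow> (nat \<Rightarrow> nat \<Rightarrow> real) \<Rightarrow> nat \<Rightarrow> (nat \<Rightarrow> real) \<Rightarrow> real" where
  "mrow_vec n M i x = Max ((\<lambda>k. M i k * x k) ` {..<n})"

definition circulant :: "nat \<Rightarrow> (nat \<Rightarrow> nat \<Rightarrow> real) \<Rightarrow> bool" where
  "circulant n A \<longleftrightarrow> (\<exists>a :: nat \<Rightarrow> real. \<forall>i<n. \<forall>j<n. A i j = a ((j + n - i) mod n))"

definition is_cycle :: "nat \<Rightarrow> (nat \<Rightarrow> nat \<Rightarrow> real) \<Rightarrow> nat list \<Rightarrow> bool" where
  "is_cycle n A vs \<longleftrightarrow> vs \<noteq> [] \<and> distinct vs \<and> set vs \<subseteq> {..<n} \<and>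
     (\<forall>l<length vs. A (vs ! l) (vs ! (Suc l mod length vs)) \<noteq> 0)"

definition cycle_weight :: "(nat \<Rightarrow> nat \<Rightarrow> real) \<Rightarrow> nat list \<Rightarrow> real" where
  "cycle_weight A vs = (\<Prod>l<length vs. A (vs ! l) (vs ! (Suc l mod length vs)))"

definition cycle_mean :: "(nat \<Rightarrow> nat \<Rightarrow> real) \<Rightarrow> nat list \<Rightarrow> real" where
  "cycle_mean A vs = root (length vs) (cycle_weight A vs)"

definition mlambda :: "nat \<Rightarrow> (nat \<Rightarrow> nat \<Rightarrow> real) \<Rightarrow> real" where
  "mlambda n A = (if \<exists>vs. is_cycle n A vs
      then Max (cycle_mean A ` {vs. is_cycle n A vs}) else 0)"

definition crit_cycle :: "nat \<Rightarrow> (nat \<Rightarrow> nat \<Rightarrow> real) \<Rightarrow> nat list \<Rightarrow> bool" where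
  "crit_cycle n A vs \<longleftrightarrow> is_cycle n A vs \<and> cycle_mean A vs = mlambda n A"

definition crit_edges :: "nat \<Rightarrow> (nat \<Rightarrow> nat \<Rightarrow> real) \<Rightarrow> (nat \<times> nat) set" where
  "crit_edges n A = {(vs ! l, vs ! (Suc l mod length vs)) | vs l. crit_cycle n A vs \<and> l < length vs}"

definition crit_node :: "nat \<Rightarrow> (nat \<Rightarrow> nat \<Rightarrow> real) \<Rightarrow> nat \<Rightarrow> bool" where
  "crit_node n A i \<longleftrightarrow> (\<exists>vs. crit_cycle n A vs \<and> i \<in> set vs)"

definition crit_sim :: "nat \<Rightarrow> (nat \<Rightarrow> nat \<Rightarrow> real) \<Rightarrow> nat \<Rightarrow> nat \<Rightarrow> bool" where
  "crit_sim n A i j \<longleftrightarrow> crit_node n A i \<and> crit_node n A j \<and>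
     (i, j) \<in> (crit_edges n A)\<^sup>* \<and> (j, i) \<in> (crit_edges n A)\<^sup>*"

definition cyclicity :: "nat \<Rightarrow> (nat \<Rightarrow> nat \<Rightarrow> real) \<Rightarrow> nat \<Rightarrow> nat" where
  "cyclicity n A i = Gcd {length vs | vs. is_cycle n A vs \<and>
      (\<forall>l<length vs. (vs ! l, vs ! (Suc l mod length vs)) \<in> crit_edges n A) \<and>
      crit_sim n A (hd vs) i}"

definition cyc_next :: "nat \<Rightarrow> (nat \<Rightarrow> nat \<Rightarrow> real) \<Rightarrow> nat \<Rightarrow> nat \<Rightarrow> bool" where
  "cyc_next n A i j \<longleftrightarrow> crit_sim n A i j \<and>
     (\<forall>l. (i, j) \<in> (crit_edges n A) ^^ l \<longrightarrow> l mod cyclicity n A i = 1 mod cyclicity n A i)"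

definition Attr :: "nat \<Rightarrow> (nat \<Rightarrow> nat \<Rightarrow> real) \<Rightarrow> (nat \<Rightarrow> real) set" where
  "Attr n A = {x. (\<forall>i<n. 0 \<le> x i) \<and>
     (\<exists>t. \<forall>i<n. mrow_vec n (mpow n A (Suc t)) i x = mlambda n A * mrow_vec n (mpow n A t) i x)}"

end

(* Let a_d = A 0 d be the first row and lambda = max_d a_d. A walk of t steps d_1, ..., d_t from
   node i has weight a_{d_1} ... a_{d_t} and ends at i + d_1 + ... + d_t (mod n), and
   (A^t x)_i is the largest weight of such a walk times x at its end. A walk of at least n steps
   contains a block of L steps with sum congruent to L s for a critical shift s (a_s = lambda);
   trading the block for critical steps gives (A^(t+1) x)_i = lambda (A^t x)_(i+s) for t >= n - 1.
   So for such t, attraction at time t means exactly that A^t x is invariant under all critical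
   shifts; this invariance descends from t + 1 to t, and attraction persists, whence
   x in Attr(A) iff A^(n^2) x is invariant under the critical shifts. The critical digraph has
   exactly the edges u -> u + s, so its components are generated by the critical shifts, and
   because n critical steps s return to the start, its cyclicity divides n and [i] ->_1 [i + s]. *)

theory Submission
  imports Defs
begin

section \<open>Closed walks\<close>

lemma successively_iff_nth:
  "successively P xs \<longleftrightarrow> (\<forall>k. Suc k < length xs \<longrightarrow> P (xs ! k) (xs ! Suc k))"
  by (induction P xs rule: successively.induct) (auto simp: nth_Cons split: nat.splits)

lemma successively_imp_rtrancl:
  assumes "successively (\<lambda>u v. (u, v) \<in> E) xs" "i \<le> j" "j < length xs"
  shows "(xs ! i, xs ! j) \<in> E\<^sup>*"
  using assms(2,3)
proof (induction j rule: dec_induct)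
  case (step j)
  then have "(xs ! j, xs ! Suc j) \<in> E" using assms(1) by (simp add: successively_iff_nth)
  with step show ?case by (meson Suc_lessD rtrancl.rtrancl_into_rtrancl)
qed simp

definition closed_walk :: "('a \<times> 'a) set \<Rightarrow> 'a list \<Rightarrow> bool" where
  "closed_walk E vs \<longleftrightarrow> vs \<noteq> [] \<and> successively (\<lambda>u v. (u, v) \<in> E) (vs @ [hd vs])"

lemma closed_walk_iff_nth:
  "closed_walk E vs \<longleftrightarrow> vs \<noteq> [] \<and> (\<forall>k<length vs. (vs ! k, vs ! (Suc k mod length vs)) \<in> E)"
proof (cases "vs = []")
  case False
  have "(vs @ [hd vs]) ! Suc k = vs ! (Suc k mod length vs)" if "k < length vs" for k
    using that False by (cases "Suc k = length vs") (auto simp: nth_append hd_conv_nth)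
  then show ?thesis
    using False by (auto simp: closed_walk_def successively_iff_nth nth_append)
qed (simp add: closed_walk_def)

lemma closed_walk_append_commute: "closed_walk E (xs @ ys) \<Longrightarrow> closed_walk E (ys @ xs)"
  by (cases xs; cases ys) (auto simp: closed_walk_def successively_append_iff successively_Cons hd_append)

lemma closed_walk_split:
  "closed_walk E (a # xs @ a # ys) \<Longrightarrow> closed_walk E (a # xs) \<and> closed_walk E (a # ys)"
  by (auto simp: closed_walk_def successively_append_iff successively_Cons hd_append)

lemma closed_walk_length_dvd:
  assumes "closed_walk E vs"
    and "\<And>ws. closed_walk E ws \<Longrightarrow> distinct ws \<Longrightarrow> set ws \<subseteq> set vs \<Longrightarrow> d dvd length ws"
  shows "d dvd length vs"
  using assms
proof (induction "length vs" arbitrary: vs rule: less_induct)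
  case less
  show ?case
  proof (cases "distinct vs")
    case False
    then obtain us a xs ys where vs: "vs = us @ [a] @ xs @ [a] @ ys"
      using not_distinct_decomp by blast
    have "closed_walk E (a # xs @ a # ys @ us)"
      using closed_walk_append_commute less.prems(1) unfolding vs by fastforce
    then have walks: "closed_walk E (a # xs)" "closed_walk E (a # ys @ us)"
      using closed_walk_split by fastforce+
    have "d dvd length (a # xs)" "d dvd length (a # ys @ us)"
      by (rule less.hyps[OF _ walks(1)] less.hyps[OF _ walks(2)]; use less.prems(2) vs in force)+
    then have "d dvd length (a # xs) + length (a # ys @ us)" by (rule dvd_add)
    then show ?thesis unfolding vs by (simp add: ac_simps)
  qed (use less.prems in blast)
qed

lemma closed_walk_rtrancl:
  assumes "closed_walk E vs" "u \<in> set vs" "v \<in> set vs"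
  shows "(u, v) \<in> E\<^sup>*"
proof -
  let ?ws = "vs @ [hd vs]"
  have path: "successively (\<lambda>u v. (u, v) \<in> E) ?ws" and ne: "vs \<noteq> []"
    using assms(1) by (auto simp: closed_walk_def)
  obtain p q where pq: "p < length vs" "q < length vs" "u = ?ws ! p" "v = ?ws ! q"
    using assms(2,3) by (auto simp: in_set_conv_nth nth_append)
  have "(u, hd vs) \<in> E\<^sup>*"
    using successively_imp_rtrancl[OF path, of p "length vs"] pq by (simp add: nth_append)
  moreover have "(hd vs, v) \<in> E\<^sup>*"
    using successively_imp_rtrancl[OF path, of 0 q] pq ne by (simp add: nth_append hd_conv_nth)
  ultimately show ?thesis by simp
qed

lemma relpow_imp_walk:
  "(u, v) \<in> E ^^ l \<Longrightarrow> \<exists>vs. length vs = l \<and> hd (vs @ [v]) = u \<and> successively (\<lambda>a b. (a, b) \<in> E) (vs @ [v])"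
proof (induction l arbitrary: v)
  case (Suc l)
  then obtain w where "(u, w) \<in> E ^^ l" "(w, v) \<in> E" by auto
  with Suc.IH obtain vs where "length vs = l" "hd (vs @ [w]) = u" "successively (\<lambda>a b. (a, b) \<in> E) (vs @ [w])"
    by blast
  with \<open>(w, v) \<in> E\<close> show ?case
    by (intro exI[of _ "vs @ [w]"]) (auto simp: successively_append_iff hd_append)
qed simp

lemma relpow_imp_closed_walk:
  assumes "(u, u) \<in> E ^^ l" "0 < l"
  obtains vs where "closed_walk E vs" "length vs = l" "hd vs = u"
proof -
  from relpow_imp_walk[OF assms(1)] obtain vs where
    "length vs = l" "hd (vs @ [u]) = u" "successively (\<lambda>a b. (a, b) \<in> E) (vs @ [u])" by blast
  moreover from this assms(2) have "vs \<noteq> []" by auto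
  ultimately show ?thesis using that by (simp add: closed_walk_def)
qed


lemma sub_add_mod_cancel:
  fixes u n d :: nat
  assumes "u < n"
  shows "((u + d) mod n + n - u) mod n = d mod n"
proof -
  have "(u + d) mod n + n - u = (u + d) mod n + (n - u)" using assms by simp
  then have "((u + d) mod n + n - u) mod n = (u + d + (n - u)) mod n" by (simp add: mod_add_left_eq)
  also have "u + d + (n - u) = d + n" using assms by simp
  finally show ?thesis by simp
qed

lemma add_sub_mod_cancel:
  fixes u n v :: nat
  assumes "u < n" "v < n"
  shows "(u + (v + n - u) mod n) mod n = v"
proof -
  have "(u + (v + n - u) mod n) mod n = (u + (v + n - u)) mod n" by (simp add: mod_add_right_eq)
  also have "u + (v + n - u) = v + n" using assms by simp
  finally show ?thesis using assms by simp
qed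

text \<open>Among the n + 1 prefixes of ds of length at most n, two have sums congruent to their lengths
  times s (pigeonhole).\<close>

lemma ex_block_sum_cong:
  fixes ds :: "nat list" and n s :: nat
  assumes "0 < n"
  obtains a b where "a < b" "b \<le> n"
    "int n dvd int (sum_list (drop a (take b ds))) - int s * int (b - a)"
proof -
  define p where "p k = (int (sum_list (take k ds)) - int s * int k) mod int n" for k
  have "\<not> inj_on p {..n}"
  proof
    assume "inj_on p {..n}"
    moreover have "p ` {..n} \<subseteq> {0..<int n}" using assms by (auto simp: p_def)
    ultimately have "card {..n} \<le> card {0..<int n}" by (rule card_inj_on_le) simp
    then show False by simp
  qed
  then obtain a b where ab: "a < b" "b \<le> n" "p a = p b"
    unfolding inj_on_def by (metis atMost_iff linorder_neq_iff order.strict_implies_order order.trans)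
  have "sum_list (take b ds) = sum_list (take a ds) + sum_list (drop a (take b ds))"
    using ab(1) by (metis append_take_drop_id less_imp_le min.absorb1 sum_list_append take_take)
  moreover have "int n dvd (int (sum_list (take b ds)) - int s * int b) - (int (sum_list (take a ds)) - int s * int a)"
    using ab(3)[symmetric] unfolding p_def by (simp add: mod_eq_dvd_iff)
  ultimately show ?thesis using that ab(1,2) by (simp add: algebra_simps of_nat_diff)
qed

lemma nat_mod_eq_if_int_dvd_diff:
  fixes a b m :: nat
  assumes "int m dvd int a - int b"
  shows "a mod m = b mod m"
  using assms by (metis mod_eq_dvd_iff of_nat_eq_iff zmod_int)

lemma prod_lessThan_less_power:
  fixes f :: "nat \<Rightarrow> 'a :: linordered_idom"
  assumes bounds: "\<And>k. k < L \<Longrightarrow> 0 \<le> f k \<and> f k \<le> M" and l: "l < L" "f l < M"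
  shows "(\<Prod>k<L. f k) < M ^ L"
proof -
  have "(\<Prod>k<L. f k) = f l * (\<Prod>k\<in>{..<L} - {l}. f k)"
    using l(1) by (simp add: prod.remove)
  also have "\<dots> \<le> f l * M ^ (L - 1)"
    using bounds l(1) prod_mono[of "{..<L} - {l}" f "\<lambda>_. M"]
    by (intro mult_left_mono) (auto simp: card_Diff_singleton)
  also have "\<dots> < M * M ^ (L - 1)"
    using l bounds[OF l(1)] by (intro mult_strict_right_mono) auto
  also have "\<dots> = M ^ L" using l(1) by (simp add: power_eq_if)
  finally show ?thesis .
qed

section \<open>Orbits of a circulant matrix\<close>

lemma circulant_first_row:
  assumes "circulant n A" "i < n" "j < n"
  shows "A i j = A 0 ((j + n - i) mod n)"
proof -
  obtain a where a: "\<forall>i<n. \<forall>j<n. A i j = a ((j + n - i) mod n)"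
    using assms(1) unfolding circulant_def by blast
  have "(j + n - i) mod n < n" using assms(2) by simp
  then show ?thesis using a assms(2,3) by simp
qed

locale max_circulant =
  fixes n :: nat and A :: "nat \<Rightarrow> nat \<Rightarrow> real"
  assumes n_pos: "0 < n"
    and A_circulant: "\<And>i j. i < n \<Longrightarrow> j < n \<Longrightarrow> A i j = A 0 ((j + n - i) mod n)"
    and A_nonneg: "\<And>i j. i < n \<Longrightarrow> j < n \<Longrightarrow> 0 \<le> A i j"
    and A_nonzero: "\<exists>i<n. \<exists>j<n. A i j \<noteq> 0"
begin

abbreviation coef :: "nat \<Rightarrow> real" where
  "coef d \<equiv> A 0 d"

definition max_coef :: real where
  "max_coef = Max (coef ` {..<n})"

definition critical_shift :: "nat \<Rightarrow> bool" where
  "critical_shift s \<longleftrightarrow> s < n \<and> coef s = max_coef"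

lemma coef_nonneg: "0 \<le> coef (d mod n)"
  using A_nonneg n_pos by simp

lemma coef_le_max_coef: "coef (d mod n) \<le> max_coef"
  unfolding max_coef_def using n_pos by (intro Max_ge) auto

lemma A_shift: "u < n \<Longrightarrow> A u ((u + d) mod n) = coef (d mod n)"
  using A_circulant[of u "(u + d) mod n"] n_pos by (simp add: sub_add_mod_cancel)

lemma A_le_max_coef: "u < n \<Longrightarrow> v < n \<Longrightarrow> A u v \<le> max_coef"
  using A_circulant coef_le_max_coef by metis

lemma max_coef_pos: "0 < max_coef"
proof -
  obtain i j where "i < n" "j < n" "A i j \<noteq> 0" using A_nonzero by blast
  then show ?thesis using A_nonneg A_le_max_coef by (metis order.not_eq_order_implies_strict order.strict_trans2)
qed

lemma ex_critical_shift: "\<exists>s. critical_shift s"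
proof -
  have "max_coef \<in> coef ` {..<n}" unfolding max_coef_def using n_pos by (intro Max_in) auto
  then show ?thesis unfolding critical_shift_def by auto
qed

text \<open>A walk of G(A) from node i is encoded by its list of steps ds: the k-th edge goes from
  i + d_0 + ... + d_(k-1) to i + d_0 + ... + d_k. Steps are read modulo n, so every list of naturals
  is a walk.\<close>

definition walk_weight :: "nat list \<Rightarrow> real" where
  "walk_weight ds = (\<Prod>d\<leftarrow>ds. coef (d mod n))"

definition walk_end :: "nat \<Rightarrow> nat list \<Rightarrow> nat" where
  "walk_end i ds = (i + sum_list ds) mod n"

lemma walk_weight_nonneg: "0 \<le> walk_weight ds"
  unfolding walk_weight_def by (induction ds) (auto intro: mult_nonneg_nonneg coef_nonneg)

lemma walk_weight_le: "walk_weight ds \<le> max_coef ^ length ds"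
proof (induction ds)
  case (Cons d ds)
  then show ?case unfolding walk_weight_def
    using coef_nonneg coef_le_max_coef walk_weight_nonneg max_coef_pos
    by (simp add: mult_mono walk_weight_def)
qed (simp add: walk_weight_def)

lemma walk_weight_append: "walk_weight (ds @ es) = walk_weight ds * walk_weight es"
  by (simp add: walk_weight_def)

lemma walk_end_lt: "walk_end i ds < n"
  using n_pos by (simp add: walk_end_def)

lemma walk_end_snoc: "walk_end i (ds @ [d]) = (walk_end i ds + d) mod n"
  by (simp add: walk_end_def mod_add_left_eq add.assoc)

lemma walk_end_Cons: "walk_end i (d # ds) = walk_end ((i + d) mod n) ds"
  by (simp add: walk_end_def mod_add_left_eq add.assoc)

lemma walk_weight_le_mpow: "i < n \<Longrightarrow> walk_weight ds \<le> mpow n A (length ds) i (walk_end i ds)"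
proof (induction ds rule: rev_induct)
  case (snoc d ds)
  let ?j = "walk_end i ds"
  have "walk_weight (ds @ [d]) = walk_weight ds * coef (d mod n)"
    by (simp add: walk_weight_def)
  also have "\<dots> \<le> mpow n A (length ds) i ?j * coef (d mod n)"
    using snoc coef_nonneg by (intro mult_right_mono) auto
  also have "\<dots> = mpow n A (length ds) i ?j * A ?j ((?j + d) mod n)"
    by (simp add: A_shift walk_end_lt)
  also have "\<dots> \<le> mpow n A (length (ds @ [d])) i (walk_end i (ds @ [d]))"
    unfolding walk_end_snoc using walk_end_lt by (simp add: mmult_def)
  finally show ?case .
qed (simp add: walk_weight_def walk_end_def)

lemma mpow_le_walk_weight:
  assumes "i < n" "k < n" "mpow n A t i k \<noteq> 0"
  shows "\<exists>ds. length ds = t \<and> walk_end i ds = k \<and> mpow n A t i k \<le> walk_weight ds"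
  using assms(2,3)
proof (induction t arbitrary: k)
  case 0
  then show ?case using assms(1) by (intro exI[of _ "[]"]) (auto simp: walk_weight_def walk_end_def split: if_splits)
next
  case (Suc t)
  have "mpow n A (Suc t) i k \<in> (\<lambda>m. mpow n A t i m * A m k) ` {..<n}"
    unfolding mpow.simps mmult_def using n_pos by (intro Max_in) auto
  then obtain m where m: "m < n" "mpow n A (Suc t) i k = mpow n A t i m * A m k" by auto
  then obtain ds where ds: "length ds = t" "walk_end i ds = m" "mpow n A t i m \<le> walk_weight ds"
    using Suc by auto
  define d where "d = (k + n - m) mod n"
  have "A m k = coef (d mod n)" using A_circulant[OF m(1) Suc.prems(1)] by (simp add: d_def)
  moreover have "walk_end i (ds @ [d]) = k" using add_sub_mod_cancel[OF m(1) Suc.prems(1)] by (simp add: walk_end_snoc ds d_def)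
  moreover have "0 \<le> A m k" using A_nonneg m(1) Suc.prems(1) by simp
  ultimately show ?case using ds m
    by (intro exI[of _ "ds @ [d]"]) (simp add: walk_weight_append mult_right_mono walk_weight_def)
qed

text \<open>A walk with at least n steps contains a block of L steps whose sum is congruent to L s; replacing
  it by L - 1 critical steps s shortens the walk by one step, and appending a step s restores the end
  node.\<close>

lemma walk_shortcut:
  assumes len: "n \<le> length ds" and s: "critical_shift s"
  shows "\<exists>es. length es = length ds - 1 \<and> (sum_list es + s) mod n = sum_list ds mod n \<and>
           walk_weight ds \<le> max_coef * walk_weight es"
proof -
  obtain a b where ab: "a < b" "b \<le> n"
      and block: "int n dvd int (sum_list (drop a (take b ds))) - int s * int (b - a)"
    using ex_block_sum_cong[OF n_pos] .
  define L where "L = b - a"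
  define T where "T = take a ds"
  define B where "B = drop a (take b ds)"
  define D where "D = drop b ds"
  have ds: "ds = T @ B @ D"
    unfolding T_def B_def D_def using ab(1)
    by (metis append.assoc append_take_drop_id less_imp_le min.absorb1 take_take)
  have "length B = L" "1 \<le> L" unfolding B_def L_def using ab len by auto
  define es where "es = T @ replicate (L - 1) s @ D"
  have "sum_list es + s = sum_list T + L * s + sum_list D"
    using \<open>1 \<le> L\<close> by (cases L) (simp_all add: es_def sum_list_replicate)
  then have "int (sum_list B) - int s * int L = int (sum_list ds) - int (sum_list es + s)"
    by (simp add: ds algebra_simps)
  with block have "(sum_list es + s) mod n = sum_list ds mod n"
    unfolding B_def L_def by (intro nat_mod_eq_if_int_dvd_diff[symmetric]) simp
  moreover have "walk_weight ds \<le> max_coef * walk_weight es"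
  proof -
    have "walk_weight ds = walk_weight T * walk_weight B * walk_weight D"
      by (simp add: ds walk_weight_append)
    also have "\<dots> \<le> walk_weight T * max_coef ^ L * walk_weight D"
      using walk_weight_le[of B] \<open>length B = L\<close> walk_weight_nonneg
      by (intro mult_right_mono mult_left_mono) auto
    also have "\<dots> = max_coef * walk_weight es"
      using s \<open>1 \<le> L\<close> by (simp add: es_def walk_weight_append walk_weight_def critical_shift_def
          power_eq_if)
    finally show ?thesis .
  qed
  moreover have "length es = length ds - 1" using \<open>length B = L\<close> \<open>1 \<le> L\<close> by (simp add: es_def ds)
  ultimately show ?thesis by blast
qed

definition orbit :: "(nat \<Rightarrow> real) \<Rightarrow> nat \<Rightarrow> nat \<Rightarrow> real" where
  "orbit x t i = mrow_vec n (mpow n A t) i x"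

definition attracted_at :: "(nat \<Rightarrow> real) \<Rightarrow> nat \<Rightarrow> bool" where
  "attracted_at x t \<longleftrightarrow> (\<forall>i<n. orbit x (Suc t) i = max_coef * orbit x t i)"

definition shift_invariant :: "(nat \<Rightarrow> real) \<Rightarrow> nat \<Rightarrow> bool" where
  "shift_invariant x t \<longleftrightarrow> (\<forall>i<n. \<forall>s. critical_shift s \<longrightarrow> orbit x t i = orbit x t ((i + s) mod n))"

context
  fixes x :: "nat \<Rightarrow> real"
  assumes x_nonneg: "\<And>i. i < n \<Longrightarrow> 0 \<le> x i"
begin

lemma walk_le_orbit: "i < n \<Longrightarrow> walk_weight ds * x (walk_end i ds) \<le> orbit x (length ds) i"
proof -
  assume i: "i < n"
  let ?j = "walk_end i ds"
  have "walk_weight ds * x ?j \<le> mpow n A (length ds) i ?j * x ?j"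
    using walk_weight_le_mpow[OF i] x_nonneg walk_end_lt by (simp add: mult_right_mono)
  also have "\<dots> \<le> orbit x (length ds) i"
    unfolding orbit_def mrow_vec_def using walk_end_lt by (intro Max_ge) auto
  finally show ?thesis .
qed

lemma orbit_le_walk: "i < n \<Longrightarrow> \<exists>ds. length ds = t \<and> orbit x t i \<le> walk_weight ds * x (walk_end i ds)"
proof -
  assume i: "i < n"
  have "orbit x t i \<in> (\<lambda>k. mpow n A t i k * x k) ` {..<n}"
    unfolding orbit_def mrow_vec_def using n_pos by (intro Max_in) auto
  then obtain k where k: "k < n" "orbit x t i = mpow n A t i k * x k" by auto
  show ?thesis
  proof (cases "mpow n A t i k = 0")
    case True
    then show ?thesis using k walk_weight_nonneg x_nonneg walk_end_lt
      by (intro exI[of _ "replicate t 0"]) simp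
  next
    case False
    then obtain ds where "length ds = t" "walk_end i ds = k" "mpow n A t i k \<le> walk_weight ds"
      using mpow_le_walk_weight[OF i k(1)] by blast
    then show ?thesis using k x_nonneg by (intro exI[of _ ds]) (simp add: mult_right_mono)
  qed
qed

lemma orbit_Suc_critical_shift:
  assumes i: "i < n" and s: "critical_shift s" and t: "n \<le> Suc t"
  shows "orbit x (Suc t) i = max_coef * orbit x t ((i + s) mod n)"
proof (rule antisym)
  obtain ds where ds: "length ds = Suc t" "orbit x (Suc t) i \<le> walk_weight ds * x (walk_end i ds)"
    using orbit_le_walk[OF i] by blast
  obtain es where es: "length es = t" "(sum_list es + s) mod n = sum_list ds mod n"
      "walk_weight ds \<le> max_coef * walk_weight es"
    using walk_shortcut[of ds s] ds(1) t s by auto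
  have "walk_end ((i + s) mod n) es = walk_end i ds"
    using es(2) unfolding walk_end_def by (metis add.assoc add.commute mod_add_left_eq mod_add_right_eq)
  then have "walk_weight ds * x (walk_end i ds) \<le> max_coef * (walk_weight es * x (walk_end ((i + s) mod n) es))"
    using es(3) x_nonneg[OF walk_end_lt] by (metis mult.assoc mult_right_mono)
  also have "\<dots> \<le> max_coef * orbit x t ((i + s) mod n)"
    using walk_le_orbit[of "(i + s) mod n" es] es(1) n_pos max_coef_pos by (simp add: mult_left_mono)
  finally show "orbit x (Suc t) i \<le> max_coef * orbit x t ((i + s) mod n)" using ds(2) by simp
next
  obtain ds where ds: "length ds = t" "orbit x t ((i + s) mod n) \<le> walk_weight ds * x (walk_end ((i + s) mod n) ds)"
    using orbit_le_walk n_pos by (meson mod_less_divisor)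
  have "max_coef * orbit x t ((i + s) mod n) \<le> max_coef * (walk_weight ds * x (walk_end ((i + s) mod n) ds))"
    using ds(2) max_coef_pos by (simp add: mult_left_mono)
  also have "\<dots> = walk_weight (s # ds) * x (walk_end i (s # ds))"
    using s by (simp add: walk_weight_def walk_end_Cons critical_shift_def)
  also have "\<dots> \<le> orbit x (Suc t) i"
    using walk_le_orbit[OF i, of "s # ds"] ds(1) by simp
  finally show "max_coef * orbit x t ((i + s) mod n) \<le> orbit x (Suc t) i" .
qed

lemma orbit_Suc:
  assumes i: "i < n"
  shows "orbit x (Suc t) i = Max ((\<lambda>d. coef d * orbit x t ((i + d) mod n)) ` {..<n})"
proof -
  let ?g = "\<lambda>d. coef d * orbit x t ((i + d) mod n)"
  have "orbit x (Suc t) i \<le> Max (?g ` {..<n})"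
  proof -
    obtain ds where ds: "length ds = Suc t" "orbit x (Suc t) i \<le> walk_weight ds * x (walk_end i ds)"
      using orbit_le_walk[OF i] by blast
    then obtain d ds' where d: "ds = d # ds'" by (cases ds) auto
    let ?j = "(i + d mod n) mod n"
    have "walk_weight ds * x (walk_end i ds) = coef (d mod n) * (walk_weight ds' * x (walk_end ?j ds'))"
      unfolding d walk_end_Cons by (simp add: walk_weight_def mod_add_right_eq)
    also have "\<dots> \<le> ?g (d mod n)"
      using walk_le_orbit[of ?j ds'] ds(1) d n_pos coef_nonneg by (simp add: mult_left_mono)
    also have "\<dots> \<le> Max (?g ` {..<n})" using n_pos by (intro Max_ge) auto
    finally show ?thesis using ds(2) by simp
  qed
  moreover have "Max (?g ` {..<n}) \<le> orbit x (Suc t) i"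
  proof -
    have "Max (?g ` {..<n}) \<in> ?g ` {..<n}" using n_pos by (intro Max_in) auto
    then obtain d where d: "d < n" "Max (?g ` {..<n}) = ?g d" by auto
    obtain ds where ds: "length ds = t"
        "orbit x t ((i + d) mod n) \<le> walk_weight ds * x (walk_end ((i + d) mod n) ds)"
      using orbit_le_walk n_pos by (meson mod_less_divisor)
    have "?g d \<le> coef d * (walk_weight ds * x (walk_end ((i + d) mod n) ds))"
      using ds(2) coef_nonneg[of d] d(1) by (simp add: mult_left_mono)
    also have "\<dots> = walk_weight (d # ds) * x (walk_end i (d # ds))"
      using d(1) by (simp add: walk_weight_def walk_end_Cons)
    also have "\<dots> \<le> orbit x (Suc t) i"
      using walk_le_orbit[OF i, of "d # ds"] ds(1) by simp
    finally show ?thesis using d(2) by simp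
  qed
  ultimately show ?thesis by (rule antisym)
qed

lemma attracted_at_Suc:
  assumes "attracted_at x t"
  shows "attracted_at x (Suc t)"
  unfolding attracted_at_def
proof (intro allI impI)
  fix i assume i: "i < n"
  have "orbit x (Suc (Suc t)) i = Max ((\<lambda>d. max_coef * (coef d * orbit x t ((i + d) mod n))) ` {..<n})"
    unfolding orbit_Suc[OF i] using assms n_pos unfolding attracted_at_def by (simp add: ac_simps)
  also have "\<dots> = max_coef * Max ((\<lambda>d. coef d * orbit x t ((i + d) mod n)) ` {..<n})"
    using max_coef_pos n_pos
    by (subst mono_Max_commute[where f = "(*) max_coef"]) (auto simp: mono_def image_image)
  also have "\<dots> = max_coef * orbit x (Suc t) i"
    unfolding orbit_Suc[OF i] ..
  finally show "orbit x (Suc (Suc t)) i = max_coef * orbit x (Suc t) i" .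
qed

lemma attracted_at_mono:
  assumes "attracted_at x t" "t \<le> t'"
  shows "attracted_at x t'"
  using assms(2) by (induction rule: dec_induct) (use assms(1) attracted_at_Suc in blast)+

lemma attracted_at_iff_shift_invariant:
  assumes t: "n \<le> Suc t"
  shows "attracted_at x t \<longleftrightarrow> shift_invariant x t"
proof
  assume attr: "attracted_at x t"
  show "shift_invariant x t" unfolding shift_invariant_def
  proof (intro allI impI)
    fix i s assume i: "i < n" and s: "critical_shift s"
    have "max_coef * orbit x t i = orbit x (Suc t) i" using attr i unfolding attracted_at_def by simp
    also have "\<dots> = max_coef * orbit x t ((i + s) mod n)" by (rule orbit_Suc_critical_shift[OF i s t])
    finally have "max_coef * orbit x t i = max_coef * orbit x t ((i + s) mod n)" .
    then show "orbit x t i = orbit x t ((i + s) mod n)" using max_coef_pos by simp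
  qed
next
  assume inv: "shift_invariant x t"
  obtain s where s: "critical_shift s" using ex_critical_shift ..
  show "attracted_at x t" unfolding attracted_at_def
  proof (intro allI impI)
    fix i assume i: "i < n"
    have "orbit x t i = orbit x t ((i + s) mod n)" using inv i s unfolding shift_invariant_def by blast
    then show "orbit x (Suc t) i = max_coef * orbit x t i" using orbit_Suc_critical_shift[OF i s t] by simp
  qed
qed

text \<open>Both sides are reached from the node j - s0 by a critical step s0 followed by a step s.\<close>

lemma shift_invariant_SucD:
  assumes t: "n \<le> Suc t" and inv: "shift_invariant x (Suc t)"
  shows "shift_invariant x t"
  unfolding shift_invariant_def
proof (intro allI impI)
  fix j s assume j: "j < n" and s: "critical_shift s"
  obtain s0 where s0: "critical_shift s0" using ex_critical_shift ..
  define i where "i = (j + n - s0) mod n"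
  have i: "i < n" using n_pos by (simp add: i_def)
  have "(i + s0) mod n = (j + n - s0 + s0) mod n" unfolding i_def by (simp add: mod_add_left_eq)
  also have "\<dots> = j" using s0 j by (simp add: critical_shift_def)
  finally have "(i + s0) mod n = j" .
  have "max_coef * orbit x t j = orbit x (Suc t) i"
    using orbit_Suc_critical_shift[OF i s0 t] \<open>(i + s0) mod n = j\<close> by simp
  also have "\<dots> = orbit x (Suc t) ((i + s) mod n)"
    using inv i s unfolding shift_invariant_def by blast
  also have "\<dots> = max_coef * orbit x t ((j + s) mod n)"
  proof -
    have "((i + s) mod n + s0) mod n = (i + s + s0) mod n" by (rule mod_add_left_eq)
    also have "\<dots> = ((i + s0) mod n + s) mod n"
      by (simp add: mod_add_right_eq ac_simps)
    also have "\<dots> = (j + s) mod n" using \<open>(i + s0) mod n = j\<close> by simp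
    finally have "((i + s) mod n + s0) mod n = (j + s) mod n" .
    then show ?thesis using orbit_Suc_critical_shift[OF _ s0 t, of "(i + s) mod n"] n_pos by simp
  qed
  finally show "orbit x t j = orbit x t ((j + s) mod n)" using max_coef_pos by simp
qed

lemma shift_invariant_antimono:
  assumes "n \<le> Suc t" "t \<le> t'" "shift_invariant x t'"
  shows "shift_invariant x t"
  using assms(2,3)
proof (induction t' rule: dec_induct)
  case (step t')
  then show ?case using assms(1) shift_invariant_SucD[of t'] by simp
qed

lemma ex_attracted_at_iff_shift_invariant:
  assumes N: "n \<le> Suc N"
  shows "(\<exists>t. attracted_at x t) \<longleftrightarrow> shift_invariant x N"
proof
  assume "\<exists>t. attracted_at x t"
  then obtain t where "attracted_at x t" ..
  then have "attracted_at x (N + t)" by (rule attracted_at_mono) simp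
  then have "shift_invariant x (N + t)" using N by (simp add: attracted_at_iff_shift_invariant)
  then show "shift_invariant x N" by (rule shift_invariant_antimono[OF N le_add1])
next
  assume "shift_invariant x N"
  then have "attracted_at x N" using N by (simp add: attracted_at_iff_shift_invariant)
  then show "\<exists>t. attracted_at x t" ..
qed

end

subsection \<open>The critical digraph\<close>

definition shift_period :: "nat \<Rightarrow> nat" where
  "shift_period s = (LEAST k. 0 < k \<and> n dvd k * s)"

definition shift_cycle :: "nat \<Rightarrow> nat \<Rightarrow> nat list" where
  "shift_cycle j s = map (\<lambda>k. (j + k * s) mod n) [0..<shift_period s]"

lemma shift_period: "0 < shift_period s" "n dvd shift_period s * s"
proof -
  have "\<exists>k. 0 < k \<and> n dvd k * s" using n_pos by (intro exI[of _ n]) simp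
  from LeastI_ex[OF this] show "0 < shift_period s" "n dvd shift_period s * s"
    unfolding shift_period_def by auto
qed

lemma distinct_shift_cycle: "distinct (shift_cycle j s)"
proof -
  have "(j + k' * s) mod n \<noteq> (j + k * s) mod n" if "k < k'" "k' < shift_period s" for k k'
  proof
    assume "(j + k' * s) mod n = (j + k * s) mod n"
    then have "n dvd (k' - k) * s" using that by (simp add: mod_eq_dvd_iff_nat diff_mult_distrib)
    moreover have "\<not> n dvd (k' - k) * s"
      using that not_less_Least[of "k' - k" "\<lambda>k. 0 < k \<and> n dvd k * s"] unfolding shift_period_def by auto
    ultimately show False by contradiction
  qed
  then show ?thesis
    unfolding shift_cycle_def distinct_map by (auto intro!: inj_onI) (metis linorder_neq_iff)
qed

lemma shift_cycle_next:
  assumes "j < n" "k < shift_period s"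
  shows "shift_cycle j s ! (Suc k mod shift_period s) = (shift_cycle j s ! k + s) mod n"
proof -
  have step: "(shift_cycle j s ! k + s) mod n = (j + Suc k * s) mod n"
    using assms(2) by (simp add: shift_cycle_def mod_add_left_eq mod_add_right_eq ac_simps)
  show ?thesis
  proof (cases "Suc k < shift_period s")
    case True
    then show ?thesis unfolding step by (simp add: shift_cycle_def)
  next
    case False
    then have last: "Suc k = shift_period s" using assms(2) by simp
    obtain q where "shift_period s * s = n * q" using shift_period(2) ..
    then have "(j + Suc k * s) mod n = j" using assms(1) by (simp add: last)
    then show ?thesis unfolding step using assms(1) last shift_period(1)[of s] by (simp add: shift_cycle_def)
  qed
qed

lemma shift_cycle_edge:
  assumes "j < n" "k < shift_period s"
  shows "A (shift_cycle j s ! k) (shift_cycle j s ! (Suc k mod shift_period s)) = coef (s mod n)"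
  using assms n_pos by (simp only: shift_cycle_next) (simp add: A_shift shift_cycle_def)

lemma cycle_mean_le_max_coef:
  assumes "is_cycle n A vs"
  shows "cycle_mean A vs \<le> max_coef"
proof -
  have L: "0 < length vs" using assms by (simp add: is_cycle_def)
  have lt: "vs ! k < n" if "k < length vs" for k
    using assms nth_mem[OF that] by (auto simp: is_cycle_def)
  have "cycle_weight A vs \<le> (\<Prod>l<length vs. max_coef)"
    unfolding cycle_weight_def using lt L by (intro prod_mono) (simp add: A_nonneg A_le_max_coef)
  then have "cycle_weight A vs \<le> max_coef ^ length vs" by simp
  then have "cycle_mean A vs \<le> root (length vs) (max_coef ^ length vs)"
    unfolding cycle_mean_def by (rule real_root_le_mono[OF L])
  also have "\<dots> = max_coef" using L max_coef_pos by (simp add: real_root_power_cancel)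
  finally show ?thesis .
qed

lemma shift_cycle_critical:
  assumes j: "j < n" and s: "critical_shift s"
  shows "is_cycle n A (shift_cycle j s)" "cycle_mean A (shift_cycle j s) = max_coef"
proof -
  have edge: "A (shift_cycle j s ! k) (shift_cycle j s ! (Suc k mod length (shift_cycle j s))) = max_coef"
    if "k < length (shift_cycle j s)" for k
    using shift_cycle_edge[OF j, of k s] that s by (simp add: shift_cycle_def critical_shift_def)
  show "is_cycle n A (shift_cycle j s)"
    unfolding is_cycle_def using edge distinct_shift_cycle shift_period(1)[of s] n_pos max_coef_pos
    by (auto simp: shift_cycle_def)
  have "cycle_weight A (shift_cycle j s) = max_coef ^ shift_period s"
    unfolding cycle_weight_def using edge by (simp add: shift_cycle_def)
  then show "cycle_mean A (shift_cycle j s) = max_coef"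
    unfolding cycle_mean_def using shift_period(1)[of s] max_coef_pos
    by (simp add: shift_cycle_def real_root_power_cancel)
qed

lemma finite_cycles: "finite {vs. is_cycle n A vs}"
proof (rule finite_subset)
  show "{vs. is_cycle n A vs} \<subseteq> {vs. set vs \<subseteq> {..<n} \<and> length vs \<le> n}"
  proof safe
    fix vs assume "is_cycle n A vs"
    then have "set vs \<subseteq> {..<n}" "distinct vs" by (auto simp: is_cycle_def)
    then show "length vs \<le> n" by (metis card_lessThan card_mono distinct_card finite_lessThan)
  qed (auto simp: is_cycle_def)
  show "finite {vs. set vs \<subseteq> {..<n} \<and> length vs \<le> n}" by (rule finite_lists_length_le) simp
qed

lemma mlambda_eq_max_coef: "mlambda n A = max_coef"
proof -
  obtain s where s: "critical_shift s" using ex_critical_shift ..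
  note cyc = shift_cycle_critical[OF n_pos s]
  have "Max (cycle_mean A ` {vs. is_cycle n A vs}) = max_coef"
    using cyc finite_cycles cycle_mean_le_max_coef by (intro Max_eqI) (auto intro: rev_image_eqI)
  then show ?thesis using cyc by (auto simp: mlambda_def)
qed

lemma crit_cycle_shift_cycle: "j < n \<Longrightarrow> critical_shift s \<Longrightarrow> crit_cycle n A (shift_cycle j s)"
  using shift_cycle_critical by (simp add: crit_cycle_def mlambda_eq_max_coef)

text \<open>An edge below max_coef would pull the geometric mean of a critical cycle below max_coef.\<close>

lemma crit_cycle_edge:
  assumes "crit_cycle n A vs" "l < length vs"
  shows "A (vs ! l) (vs ! (Suc l mod length vs)) = max_coef"
proof (rule ccontr)
  let ?L = "length vs" and ?f = "\<lambda>k. A (vs ! k) (vs ! (Suc k mod length vs))"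
  assume ne: "?f l \<noteq> max_coef"
  have L: "0 < ?L" using assms(2) by linarith
  have lt_n: "vs ! k < n" if "k < ?L" for k
    using assms(1) nth_mem[OF that] by (auto simp: crit_cycle_def is_cycle_def)
  have bounds: "0 \<le> ?f k \<and> ?f k \<le> max_coef" if "k < ?L" for k
    using that L lt_n by (simp add: A_nonneg A_le_max_coef)
  have "cycle_weight A vs < max_coef ^ ?L"
    unfolding cycle_weight_def using bounds assms(2) ne L
    by (intro prod_lessThan_less_power) (auto simp: order.strict_iff_order)
  then have "cycle_mean A vs < root ?L (max_coef ^ ?L)"
    unfolding cycle_mean_def by (rule real_root_less_mono[OF L])
  then show False
    using assms(1) L max_coef_pos by (simp add: crit_cycle_def mlambda_eq_max_coef real_root_power_cancel)
qed

lemma crit_edges_eq: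
  "crit_edges n A = {(u, (u + s) mod n) | u s. u < n \<and> critical_shift s}"
proof safe
  fix u v assume "(u, v) \<in> crit_edges n A"
  then obtain vs l where vs: "crit_cycle n A vs" "l < length vs" "u = vs ! l" "v = vs ! (Suc l mod length vs)"
    unfolding crit_edges_def by blast
  have "set vs \<subseteq> {..<n}" using vs(1) by (simp add: crit_cycle_def is_cycle_def)
  moreover have "Suc l mod length vs < length vs" using vs(2) by (auto intro: mod_less_divisor)
  ultimately have uv: "u < n" "v < n" using vs(2-4) nth_mem by blast+
  define s where "s = (v + n - u) mod n"
  have "critical_shift s"
    using crit_cycle_edge[OF vs(1,2)] A_circulant[OF uv] n_pos by (simp add: critical_shift_def s_def vs)
  moreover have "v = (u + s) mod n" using add_sub_mod_cancel[OF uv] by (simp add: s_def)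
  ultimately show "\<exists>u' s. (u, v) = (u', (u' + s) mod n) \<and> u' < n \<and> critical_shift s"
    using uv(1) by blast
next
  fix u s assume u: "u < n" and s: "critical_shift s"
  let ?c = "shift_cycle u s"
  have c: "length ?c = shift_period s" "?c ! 0 = u" "0 < length ?c"
    using u shift_period(1)[of s] by (simp_all add: shift_cycle_def)
  have "(?c ! 0, ?c ! (Suc 0 mod length ?c)) \<in> crit_edges n A"
    unfolding crit_edges_def using crit_cycle_shift_cycle[OF u s] c(3) by blast
  then show "(u, (u + s) mod n) \<in> crit_edges n A"
    using shift_cycle_next[OF u shift_period(1)] by (simp only: c)
qed

lemma crit_edge_lt: "(u, v) \<in> crit_edges n A \<Longrightarrow> u < n \<and> v < n"
  using n_pos by (auto simp: crit_edges_eq)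

lemma crit_node_iff: "crit_node n A u \<longleftrightarrow> u < n"
proof
  assume "u < n"
  obtain s where "critical_shift s" using ex_critical_shift ..
  moreover have "shift_cycle u s ! 0 = u" "0 < length (shift_cycle u s)"
    using \<open>u < n\<close> shift_period(1)[of s] by (simp_all add: shift_cycle_def)
  ultimately show "crit_node n A u"
    unfolding crit_node_def using crit_cycle_shift_cycle[OF \<open>u < n\<close>] by (metis nth_mem)
qed (auto simp: crit_node_def crit_cycle_def is_cycle_def)

lemma crit_sim_iff:
  "crit_sim n A u v \<longleftrightarrow> u < n \<and> v < n \<and> (u, v) \<in> (crit_edges n A)\<^sup>* \<and> (v, u) \<in> (crit_edges n A)\<^sup>*"
  by (simp add: crit_sim_def crit_node_iff)

lemma critical_shift_relpow:
  assumes "j < n" "critical_shift s"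
  shows "(j, (j + k * s) mod n) \<in> crit_edges n A ^^ k"
proof (induction k)
  case (Suc k)
  have "((j + k * s) mod n, ((j + k * s) mod n + s) mod n) \<in> crit_edges n A"
    using assms(2) n_pos unfolding crit_edges_eq by auto
  moreover have "((j + k * s) mod n + s) mod n = (j + Suc k * s) mod n"
    by (simp add: mod_add_left_eq mod_add_right_eq ac_simps)
  ultimately show ?case using Suc.IH by (auto intro: relpow_Suc_I)
qed (use assms in simp)

lemma closed_walk_crit_edges_lt:
  assumes "closed_walk (crit_edges n A) vs"
  shows "set vs \<subseteq> {..<n}"
proof
  fix v assume "v \<in> set vs"
  then obtain k where "k < length vs" "v = vs ! k" by (auto simp: in_set_conv_nth)
  then show "v \<in> {..<n}" using assms crit_edge_lt by (force simp: closed_walk_iff_nth)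
qed

text \<open>Every closed walk of the critical digraph splits into elementary cycles, whose lengths are
  multiples of the cyclicity by its definition.\<close>

lemma cyclicity_dvd_closed_walk:
  assumes walk: "closed_walk (crit_edges n A) vs" and i: "i \<in> set vs"
  shows "cyclicity n A i dvd length vs"
  using walk
proof (rule closed_walk_length_dvd)
  fix ws assume ws: "closed_walk (crit_edges n A) ws" "distinct ws" "set ws \<subseteq> set vs"
  have lt: "set ws \<subseteq> {..<n}" "set vs \<subseteq> {..<n}" using ws(1) walk by (simp_all add: closed_walk_crit_edges_lt)
  have edges: "\<forall>l<length ws. (ws ! l, ws ! (Suc l mod length ws)) \<in> crit_edges n A"
    using ws(1) by (simp add: closed_walk_iff_nth)
  have "A (ws ! l) (ws ! (Suc l mod length ws)) \<noteq> 0" if "l < length ws" for l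
    using edges that max_coef_pos n_pos by (auto simp: crit_edges_eq A_shift critical_shift_def)
  then have "is_cycle n A ws" using ws lt by (simp add: is_cycle_def closed_walk_def)
  moreover have "hd ws \<in> set vs" using ws by (auto simp: closed_walk_def)
  then have "crit_sim n A (hd ws) i" using i lt closed_walk_rtrancl[OF walk] by (auto simp: crit_sim_iff)
  ultimately show "cyclicity n A i dvd length ws"
    unfolding cyclicity_def using edges by (intro Gcd_dvd) blast
qed

lemma cyclicity_dvd_relpow:
  assumes "(i, i) \<in> crit_edges n A ^^ l" "0 < l"
  shows "cyclicity n A i dvd l"
proof -
  obtain vs where "closed_walk (crit_edges n A) vs" "length vs = l" "hd vs = i"
    using relpow_imp_closed_walk[OF assms] .
  then show ?thesis using cyclicity_dvd_closed_walk hd_in_set by (fastforce simp: closed_walk_def)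
qed

text \<open>Going around once more, n - 1 further critical steps s lead back from i + s to i, and a closed
  walk of length n runs through i; so every walk from i to i + s has length 1 modulo the
  cyclicity.\<close>

lemma cyc_next_critical_shift:
  assumes i: "i < n" and s: "critical_shift s"
  shows "cyc_next n A i ((i + s) mod n)"
proof -
  let ?E = "crit_edges n A" and ?j = "(i + s) mod n" and ?\<sigma> = "cyclicity n A i"
  have j: "?j < n" using n_pos by simp
  have "s + (n - 1) * s = n * s" using n_pos by (cases n) simp_all
  then have "(?j + (n - 1) * s) mod n = i" using i by (simp add: mod_add_left_eq add.assoc)
  then have return: "(?j, i) \<in> ?E ^^ (n - 1)" using critical_shift_relpow[OF j s, of "n - 1"] by simp
  have step: "(i, ?j) \<in> ?E" using i s by (auto simp: crit_edges_eq)
  have n_dvd: "?\<sigma> dvd n" using critical_shift_relpow[OF i s, of n] i n_pos by (simp add: cyclicity_dvd_relpow)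
  have "l mod ?\<sigma> = 1 mod ?\<sigma>" if "(i, ?j) \<in> ?E ^^ l" for l
  proof (cases "l + (n - 1) = 0")
    case True
    then have "n = 1" using n_pos by simp
    then show ?thesis using n_dvd by simp
  next
    case False
    have "(i, i) \<in> ?E ^^ (l + (n - 1))" using that return by (auto simp: relpow_add)
    then have "?\<sigma> dvd l + (n - 1)" by (rule cyclicity_dvd_relpow) (use False in linarith)
    then have "(l + (n - 1)) mod ?\<sigma> = 0" by simp
    moreover have "l + n = Suc (l + (n - 1))" using n_pos by simp
    ultimately have "(l + n) mod ?\<sigma> = 1 mod ?\<sigma>" by (metis mod_Suc_eq One_nat_def)
    moreover obtain q where "n = ?\<sigma> * q" using n_dvd ..
    then have "(l + n) mod ?\<sigma> = l mod ?\<sigma>" by (metis mod_mult_self2)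
    ultimately show ?thesis by simp
  qed
  moreover have "crit_sim n A i ?j"
    using i j step return by (auto simp: crit_sim_iff dest: relpow_imp_rtrancl)
  ultimately show ?thesis unfolding cyc_next_def by blast
qed

lemma Attr_iff_shift_invariant:
  assumes x_nonneg: "\<And>i. i < n \<Longrightarrow> 0 \<le> x i" and N: "n \<le> Suc N"
  shows "x \<in> Attr n A \<longleftrightarrow> shift_invariant x N"
proof -
  have "x \<in> Attr n A \<longleftrightarrow> (\<exists>t. attracted_at x t)"
    using x_nonneg by (simp add: Attr_def attracted_at_def orbit_def mlambda_eq_max_coef)
  also have "\<dots> \<longleftrightarrow> shift_invariant x N"
    using ex_attracted_at_iff_shift_invariant[OF x_nonneg N] .
  finally show ?thesis .
qed

lemma shift_invariant_imp_crit_sim_eq: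
  assumes inv: "shift_invariant x t" and sim: "crit_sim n A i j"
  shows "orbit x t i = orbit x t j"
proof -
  have "(i, j) \<in> (crit_edges n A)\<^sup>*" using sim by (simp add: crit_sim_iff)
  then show ?thesis
  proof (induction rule: rtrancl_induct)
    case (step u v)
    then obtain s where "u < n" "critical_shift s" "v = (u + s) mod n" by (auto simp: crit_edges_eq)
    then have "orbit x t u = orbit x t v" using inv unfolding shift_invariant_def by blast
    then show ?case using step.IH by simp
  qed simp
qed

lemma cyc_next_eq_imp_shift_invariant:
  assumes "\<forall>i<n. \<forall>j<n. cyc_next n A i j \<longrightarrow> orbit x t i = orbit x t j"
  shows "shift_invariant x t"
  unfolding shift_invariant_def
proof (intro allI impI)
  fix i s assume "i < n" "critical_shift s"
  moreover have "(i + s) mod n < n" using n_pos by simp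
  ultimately show "orbit x t i = orbit x t ((i + s) mod n)"
    using assms cyc_next_critical_shift by blast
qed

end

theorem proposition5:
  fixes n :: nat and A :: "nat \<Rightarrow> nat \<Rightarrow> real" and x :: "nat \<Rightarrow> real"
  assumes circ: "circulant n A"
    and nonneg: "\<forall>i<n. \<forall>j<n. 0 \<le> A i j"
    and nonzero: "\<exists>i<n. \<exists>j<n. A i j \<noteq> 0"
    and xnonneg: "\<forall>i<n. 0 \<le> x i"
  shows "(x \<in> Attr n A \<longleftrightarrow>
           (\<forall>i<n. \<forall>j<n. cyc_next n A i j \<longrightarrow>
              mrow_vec n (mpow n A (n^2)) i x = mrow_vec n (mpow n A (n^2)) j x))
       \<and> (x \<in> Attr n A \<longleftrightarrow>
           (\<forall>i<n. \<forall>j<n. crit_sim n A i j \<longrightarrow>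
              mrow_vec n (mpow n A (n^2)) i x = mrow_vec n (mpow n A (n^2)) j x))"
proof -
  have n: "0 < n" using nonzero by auto
  interpret max_circulant n A
  proof
    fix i j assume "i < n" "j < n"
    then show "A i j = A 0 ((j + n - i) mod n)" by (rule circulant_first_row[OF circ])
    show "0 \<le> A i j" using nonneg \<open>i < n\<close> \<open>j < n\<close> by blast
  qed (use n nonzero in auto)
  let ?N = "n^2"
  have "n \<le> Suc ?N" by (simp add: power2_eq_square le_SucI le_square)
  then have attr: "x \<in> Attr n A \<longleftrightarrow> shift_invariant x ?N"
    using Attr_iff_shift_invariant xnonneg by blast
  have crit_sim_eq: "\<forall>i<n. \<forall>j<n. crit_sim n A i j \<longrightarrow> orbit x ?N i = orbit x ?N j"
    if "shift_invariant x ?N" using that shift_invariant_imp_crit_sim_eq by blast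
  have "shift_invariant x ?N"
    if "\<forall>i<n. \<forall>j<n. cyc_next n A i j \<longrightarrow> orbit x ?N i = orbit x ?N j"
    using that by (rule cyc_next_eq_imp_shift_invariant)
  with attr crit_sim_eq show ?thesis unfolding orbit_def cyc_next_def by blast
qed

end
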